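(* For $\delta\in[-1,1]$ let $C_\delta(u,v)=\dfrac{uv}{1+\delta(1-u)(1-v)}$, $(u,v)\in[0,1]^2$ (Ali–Mikhail–Haq family). If $\delta\in[0,1]$, then $C_\delta$ is $I(-1,1)$ and $I(1,-1)$. If $\delta\in[-1,0]$, then $C_\delta$ is $I(1,1)$ and $I(-1,-1)$.
   Context: For $\alpha\in\{-1,1\}^2$ and a random pair $\mathbf X$, write $\alpha\mathbf X=(\alpha_1X_1,\alpha_2X_2)$; inequalities between vectors are componentwise. $\mathbf X$ is $I(\alpha)$ if for every $\mathbf x\in\mathbb R^2$, $\mathbb P[\alpha\mathbf X>\mathbf x\mid \alpha\mathbf X>\mathbf x']\le \mathbb P[\alpha\mathbf X>\mathbf x\mid \alpha\mathbf X>\mathbf x'']$ whenever $\mathbf x'\le\mathbf x''$ and $\mathbb P[\alpha\mathbf X>\mathbf x'']>0$. A copula is $I(\alpha)$ if a random vector with that distribution function is. $C_\delta$ is a 2-copula for each $\delta\in[-1,1]$. *)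

theory Defs
  imports "HOL-Probability.Probability"
begin

definition sgnact :: "real \<times> real \<Rightarrow> real \<times> real \<Rightarrow> real \<times> real" where
  "sgnact \<alpha> y = (fst \<alpha> * fst y, snd \<alpha> * snd y)"

definition vgt :: "real \<times> real \<Rightarrow> real \<times> real \<Rightarrow> bool" where
  "vgt a b \<longleftrightarrow> fst a > fst b \<and> snd a > snd b"

definition vle :: "real \<times> real \<Rightarrow> real \<times> real \<Rightarrow> bool" where
  "vle a b \<longleftrightarrow> fst a \<le> fst b \<and> snd a \<le> snd b"

definition condP :: "'a measure \<Rightarrow> 'a set \<Rightarrow> 'a set \<Rightarrow> real" where
  "condP M A B = measure M (A \<inter> B) / measure M B"

definition rv_I :: "'a measure \<Rightarrow> ('a \<Rightarrow> real \<times> real) \<Rightarrow> real \<times> real \<Rightarrow> bool" where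
  "rv_I M X \<alpha> \<longleftrightarrow>
     (\<forall>x x' x''. vle x' x'' \<longrightarrow>
        measure M {\<omega>\<in>space M. vgt (sgnact \<alpha> (X \<omega>)) x''} > 0 \<longrightarrow>
        condP M {\<omega>\<in>space M. vgt (sgnact \<alpha> (X \<omega>)) x} {\<omega>\<in>space M. vgt (sgnact \<alpha> (X \<omega>)) x'}
        \<le> condP M {\<omega>\<in>space M. vgt (sgnact \<alpha> (X \<omega>)) x} {\<omega>\<in>space M. vgt (sgnact \<alpha> (X \<omega>)) x''})"

definition clamp01 :: "real \<Rightarrow> real" where
  "clamp01 u = max 0 (min 1 u)"

definition has_dist_fun :: "'a measure \<Rightarrow> ('a \<Rightarrow> real \<times> real) \<Rightarrow> (real \<Rightarrow> real \<Rightarrow> real) \<Rightarrow> bool" where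
  "has_dist_fun M X C \<longleftrightarrow>
     (\<forall>u v. measure M {\<omega>\<in>space M. fst (X \<omega>) \<le> u \<and> snd (X \<omega>) \<le> v} = C (clamp01 u) (clamp01 v))"

text \<open>A copula is I(alpha) if a random pair with that distribution function is
  (the property only depends on the distribution, so we require it of every such pair).\<close>
definition copula_I :: "(real \<Rightarrow> real \<Rightarrow> real) \<Rightarrow> real \<times> real \<Rightarrow> bool" where
  "copula_I C \<alpha> \<longleftrightarrow>
     (\<forall>(M :: (real \<times> real) measure) X. prob_space M \<longrightarrow> X \<in> M \<rightarrow>\<^sub>M borel \<longrightarrow>
        has_dist_fun M X C \<longrightarrow> rv_I M X \<alpha>)"

definition AMH :: "real \<Rightarrow> real \<Rightarrow> real \<Rightarrow> real" where
  "AMH \<delta> u v = u * v / (1 + \<delta> * (1 - u) * (1 - v))"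

end

(*
  A random pair is I(alpha) as soon as its orthant function G(x) = P[alpha X > x] is TP2,
  G(x) G(y) <= G(sup x y) G(inf x y): the events {alpha X > x} are closed under intersection,
  {alpha X > x} \<inter> {alpha X > x'} = {alpha X > sup x x'}, so the conditional probability in the
  definition is G(sup x x') / G(x'), and TP2 together with the antitonicity of G makes it
  nondecreasing in x'.

  The margins of a copula are uniform, hence atomless, so for the four sign vectors G is, up to
  clamping to [0,1] and monotone changes of variable, the survival function 1 - u - v + C(u,v),
  the copula C itself, or u - C(u,v); a decreasing change of variable in one coordinate turns
  TP2 into the reverse rule RR2. For the AMH copula, with D(u,v) = 1 + delta (1-u)(1-v), each
  of these inequalities is governed by D(u,v') D(u',v) - D(u,v) D(u',v') = - delta (u'-u)(v'-v),
  whose sign is that of - delta; the survival function, (1-u)(1-v)(1 + delta (1-u-v)) / D(u,v),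
  needs in addition the corresponding exchange identity for its numerator.
*)

theory Submission
  imports Defs
begin

lemma clamp01_bounds [simp]: "0 \<le> clamp01 a" "clamp01 a \<le> 1"
  by (simp_all add: clamp01_def)

lemma clamp01_simps [simp]: "clamp01 0 = 0" "clamp01 1 = 1"
  by (simp_all add: clamp01_def)

lemma clamp01_mono: "a \<le> b \<Longrightarrow> clamp01 a \<le> clamp01 b"
  by (simp add: clamp01_def)

lemma clamp01_diff_le: "b \<le> a \<Longrightarrow> clamp01 a - clamp01 b \<le> a - b"
  by (simp add: clamp01_def)

section \<open>Total positivity of orthant functions\<close>

definition tp2 :: "(real \<times> real \<Rightarrow> real) \<Rightarrow> bool" where
  "tp2 G \<longleftrightarrow> (\<forall>x1 y1 x2 y2. x1 \<le> y1 \<longrightarrow> x2 \<le> y2 \<longrightarrow> G (x1, y2) * G (y1, x2) \<le> G (x1, x2) * G (y1, y2))"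

lemma tp2_sup_inf:
  assumes "tp2 G"
  shows "G a * G b \<le> G (sup a b) * G (inf a b)"
proof -
  obtain a1 a2 b1 b2 where ab: "a = (a1, a2)" "b = (b1, b2)"
    by fastforce
  consider "a1 \<le> b1" "a2 \<le> b2" | "a1 \<le> b1" "b2 \<le> a2" | "b1 \<le> a1" "a2 \<le> b2" | "b1 \<le> a1" "b2 \<le> a2"
    by linarith
  moreover have T: "G (x1, y2) * G (y1, x2) \<le> G (x1, x2) * G (y1, y2)" if "x1 \<le> y1" "x2 \<le> y2" for x1 y1 x2 y2
    using assms that unfolding tp2_def by blast
  ultimately show ?thesis
    unfolding ab using T[of a1 b1 b2 a2] T[of b1 a1 a2 b2]
    by cases (auto simp: sup_real_def inf_real_def max_def min_def mult.commute)
qed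

lemma sets_orthant:
  assumes "X \<in> M \<rightarrow>\<^sub>M borel"
  shows "{\<omega>\<in>space M. vgt (sgnact \<alpha> (X \<omega>)) x} \<in> sets M"
proof -
  have [measurable]: "X \<in> M \<rightarrow>\<^sub>M borel \<Otimes>\<^sub>M borel"
    using assms by (simp add: borel_prod)
  show ?thesis
    unfolding vgt_def sgnact_def by measurable
qed

lemma rv_I_if_tp2:
  assumes "finite_measure M" "X \<in> M \<rightarrow>\<^sub>M borel"
    and orthant: "\<And>x. measure M {\<omega>\<in>space M. vgt (sgnact \<alpha> (X \<omega>)) x} = G x"
    and "tp2 G"
  shows "rv_I M X \<alpha>"
proof -
  interpret finite_measure M by fact
  define A where "A x = {\<omega>\<in>space M. vgt (sgnact \<alpha> (X \<omega>)) x}" for x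
  have A_Int: "A x \<inter> A y = A (sup x y)" for x y
    unfolding A_def vgt_def by (auto simp: sup_prod_def sup_real_def)
  have G_antimono: "G y \<le> G x" if "x \<le> y" for x y
  proof -
    have "A y \<subseteq> A x"
      using that unfolding A_def vgt_def less_eq_prod_def by auto
    then have "measure M (A y) \<le> measure M (A x)"
      using sets_orthant[OF assms(2)] by (intro finite_measure_mono) (simp_all add: A_def)
    then show ?thesis
      by (simp add: A_def orthant)
  qed
  have G_nonneg: "0 \<le> G x" for x
    using measure_nonneg[of M "A x"] by (simp add: A_def orthant)
  show ?thesis
    unfolding rv_I_def A_def[symmetric]
  proof (intro allI impI)
    fix x x' x'' :: "real \<times> real"
    assume "vle x' x''" "0 < measure M (A x'')"
    then have "x' \<le> x''" "0 < G x''"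
      by (simp_all add: vle_def less_eq_prod_def A_def orthant)
    then have "0 < G x'"
      using G_antimono by (meson less_le_trans)
    have "sup (sup x x') x'' = sup x x''" "x' \<le> inf (sup x x') x''"
      using \<open>x' \<le> x''\<close> by (simp_all add: sup_assoc sup.absorb2)
    then have "G (sup (sup x x') x'') * G (inf (sup x x') x'') \<le> G (sup x x'') * G x'"
      using G_antimono G_nonneg by (simp add: mult_left_mono)
    then have "G (sup x x') * G x'' \<le> G (sup x x'') * G x'"
      using tp2_sup_inf[OF \<open>tp2 G\<close>] by (rule order.trans[rotated])
    then have "G (sup x x') / G x' \<le> G (sup x x'') / G x''"
      using \<open>0 < G x'\<close> \<open>0 < G x''\<close> by (simp add: field_simps)
    then show "condP M (A x) (A x') \<le> condP M (A x) (A x'')"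
      unfolding condP_def A_Int by (simp add: A_def orthant)
  qed
qed

section \<open>Random pairs with a given copula\<close>

lemma (in prob_space) AE_neq_if_cdf_clamp01:
  assumes [measurable]: "Y \<in> borel_measurable M"
    and cdf: "\<And>a. prob {\<omega>\<in>space M. Y \<omega> \<le> a} = clamp01 a"
  shows "AE \<omega> in M. Y \<omega> \<noteq> a"
proof -
  have "prob {\<omega>\<in>space M. Y \<omega> = a} \<le> 0 + e" if "0 < e" for e
  proof -
    have "prob {\<omega>\<in>space M. Y \<omega> = a} \<le> prob ({\<omega>\<in>space M. Y \<omega> \<le> a} - {\<omega>\<in>space M. Y \<omega> \<le> a - e})"
      using that by (intro finite_measure_mono) auto
    also have "\<dots> = clamp01 a - clamp01 (a - e)"
      using that by (subst finite_measure_Diff) (auto simp: cdf)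
    also have "\<dots> \<le> e"
      using clamp01_diff_le[of "a - e" a] that by simp
    finally show ?thesis
      by simp
  qed
  then have "prob {\<omega>\<in>space M. Y \<omega> = a} = 0"
    using measure_le_0_iff field_le_epsilon by blast
  then show ?thesis
    by (simp add: prob_Collect_eq_0)
qed

locale copula_distributed = prob_space M for M :: "'a measure" +
  fixes X :: "'a \<Rightarrow> real \<times> real" and C :: "real \<Rightarrow> real \<Rightarrow> real"
  assumes measurable_X: "X \<in> M \<rightarrow>\<^sub>M borel"
    and dist_fun: "has_dist_fun M X C"
    and copula_u_1: "\<And>u. 0 \<le> u \<Longrightarrow> u \<le> 1 \<Longrightarrow> C u 1 = u"
    and copula_1_v: "\<And>v. 0 \<le> v \<Longrightarrow> v \<le> 1 \<Longrightarrow> C 1 v = v"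
begin

lemma measurable_X_pair [measurable]: "X \<in> M \<rightarrow>\<^sub>M borel \<Otimes>\<^sub>M borel"
  using measurable_X by (simp add: borel_prod)

lemma joint_cdf: "prob {\<omega>\<in>space M. fst (X \<omega>) \<le> a \<and> snd (X \<omega>) \<le> b} = C (clamp01 a) (clamp01 b)"
  using dist_fun unfolding has_dist_fun_def by blast

lemma AE_le_1: "AE \<omega> in M. fst (X \<omega>) \<le> 1 \<and> snd (X \<omega>) \<le> 1"
  using joint_cdf[of 1 1] copula_u_1[of 1] by (simp add: prob_Collect_eq_1)

lemma cdf_fst: "prob {\<omega>\<in>space M. fst (X \<omega>) \<le> a} = clamp01 a"
proof -
  have "prob {\<omega>\<in>space M. fst (X \<omega>) \<le> a} = prob {\<omega>\<in>space M. fst (X \<omega>) \<le> a \<and> snd (X \<omega>) \<le> 1}"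
    using AE_le_1 by (intro prob_eq_AE) auto
  then show ?thesis
    by (simp add: joint_cdf copula_u_1)
qed

lemma cdf_snd: "prob {\<omega>\<in>space M. snd (X \<omega>) \<le> b} = clamp01 b"
proof -
  have "prob {\<omega>\<in>space M. snd (X \<omega>) \<le> b} = prob {\<omega>\<in>space M. fst (X \<omega>) \<le> 1 \<and> snd (X \<omega>) \<le> b}"
    using AE_le_1 by (intro prob_eq_AE) auto
  then show ?thesis
    by (simp add: joint_cdf copula_1_v)
qed

lemma AE_fst_neq: "AE \<omega> in M. fst (X \<omega>) \<noteq> a"
  by (rule AE_neq_if_cdf_clamp01) (simp_all add: cdf_fst)

lemma AE_snd_neq: "AE \<omega> in M. snd (X \<omega>) \<noteq> b"
  by (rule AE_neq_if_cdf_clamp01) (simp_all add: cdf_snd)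

lemma orthant_pp:
  "prob {\<omega>\<in>space M. vgt (sgnact (1, 1) (X \<omega>)) x}
     = 1 - clamp01 (fst x) - clamp01 (snd x) + C (clamp01 (fst x)) (clamp01 (snd x))"
proof -
  let ?U = "{\<omega>\<in>space M. fst (X \<omega>) \<le> fst x}" and ?V = "{\<omega>\<in>space M. snd (X \<omega>) \<le> snd x}"
  have "{\<omega>\<in>space M. vgt (sgnact (1, 1) (X \<omega>)) x} = space M - (?U \<union> ?V)"
    by (auto simp: vgt_def sgnact_def)
  moreover have "?V \<inter> ?U = {\<omega>\<in>space M. fst (X \<omega>) \<le> fst x \<and> snd (X \<omega>) \<le> snd x}"
    by auto
  ultimately show ?thesis
    by (simp add: prob_compl prob_space finite_measure_Union' finite_measure_Diff' joint_cdf cdf_fst cdf_snd)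
qed

lemma orthant_mm:
  "prob {\<omega>\<in>space M. vgt (sgnact (-1, -1) (X \<omega>)) x} = C (clamp01 (- fst x)) (clamp01 (- snd x))"
proof -
  have "prob {\<omega>\<in>space M. vgt (sgnact (-1, -1) (X \<omega>)) x}
      = prob {\<omega>\<in>space M. fst (X \<omega>) \<le> - fst x \<and> snd (X \<omega>) \<le> - snd x}"
    using AE_fst_neq[of "- fst x"] AE_snd_neq[of "- snd x"]
    by (intro prob_eq_AE) (auto simp: vgt_def sgnact_def)
  then show ?thesis
    by (simp add: joint_cdf)
qed

lemma orthant_mp:
  "prob {\<omega>\<in>space M. vgt (sgnact (-1, 1) (X \<omega>)) x}
     = clamp01 (- fst x) - C (clamp01 (- fst x)) (clamp01 (snd x))"
proof -
  let ?U = "{\<omega>\<in>space M. fst (X \<omega>) \<le> - fst x}" and ?V = "{\<omega>\<in>space M. snd (X \<omega>) \<le> snd x}"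
  have "prob {\<omega>\<in>space M. vgt (sgnact (-1, 1) (X \<omega>)) x} = prob (?U - ?V)"
    using AE_fst_neq[of "- fst x"] by (intro measure_eq_AE) (auto simp: vgt_def sgnact_def)
  moreover have "?U \<inter> ?V = {\<omega>\<in>space M. fst (X \<omega>) \<le> - fst x \<and> snd (X \<omega>) \<le> snd x}"
    by auto
  ultimately show ?thesis
    by (simp add: finite_measure_Diff' joint_cdf cdf_fst)
qed

lemma orthant_pm:
  "prob {\<omega>\<in>space M. vgt (sgnact (1, -1) (X \<omega>)) x}
     = clamp01 (- snd x) - C (clamp01 (fst x)) (clamp01 (- snd x))"
proof -
  let ?U = "{\<omega>\<in>space M. fst (X \<omega>) \<le> fst x}" and ?V = "{\<omega>\<in>space M. snd (X \<omega>) \<le> - snd x}"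
  have "prob {\<omega>\<in>space M. vgt (sgnact (1, -1) (X \<omega>)) x} = prob (?V - ?U)"
    using AE_snd_neq[of "- snd x"] by (intro measure_eq_AE) (auto simp: vgt_def sgnact_def)
  moreover have "?V \<inter> ?U = {\<omega>\<in>space M. fst (X \<omega>) \<le> fst x \<and> snd (X \<omega>) \<le> - snd x}"
    by auto
  ultimately show ?thesis
    by (simp add: finite_measure_Diff' joint_cdf cdf_snd)
qed

end

lemma copula_I_if_orthant_tp2:
  assumes "\<And>u. 0 \<le> u \<Longrightarrow> u \<le> 1 \<Longrightarrow> C u 1 = u" "\<And>v. 0 \<le> v \<Longrightarrow> v \<le> 1 \<Longrightarrow> C 1 v = v"
    and "tp2 G"
    and orthant: "\<And>(M :: (real \<times> real) measure) X x. copula_distributed M X C \<Longrightarrow>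
      measure M {\<omega>\<in>space M. vgt (sgnact \<alpha> (X \<omega>)) x} = G x"
  shows "copula_I C \<alpha>"
  unfolding copula_I_def
proof (intro allI impI)
  fix M :: "(real \<times> real) measure" and X
  assume "prob_space M" "X \<in> M \<rightarrow>\<^sub>M borel" "has_dist_fun M X C"
  then have "copula_distributed M X C"
    using assms(1,2) by (simp add: copula_distributed_def copula_distributed_axioms_def)
  then show "rv_I M X \<alpha>"
    using \<open>prob_space M\<close> \<open>X \<in> M \<rightarrow>\<^sub>M borel\<close> orthant \<open>tp2 G\<close>
    by (intro rv_I_if_tp2) (auto simp: prob_space_def)
qed

section \<open>Total positivity on the unit square\<close>

definition tp2_on_unit_square :: "(real \<Rightarrow> real \<Rightarrow> real) \<Rightarrow> bool" where
  "tp2_on_unit_square H \<longleftrightarrow>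
     (\<forall>u u' v v'. 0 \<le> u \<longrightarrow> u \<le> u' \<longrightarrow> u' \<le> 1 \<longrightarrow> 0 \<le> v \<longrightarrow> v \<le> v' \<longrightarrow> v' \<le> 1 \<longrightarrow>
        H u v' * H u' v \<le> H u v * H u' v')"

definition rr2_on_unit_square :: "(real \<Rightarrow> real \<Rightarrow> real) \<Rightarrow> bool" where
  "rr2_on_unit_square H \<longleftrightarrow>
     (\<forall>u u' v v'. 0 \<le> u \<longrightarrow> u \<le> u' \<longrightarrow> u' \<le> 1 \<longrightarrow> 0 \<le> v \<longrightarrow> v \<le> v' \<longrightarrow> v' \<le> 1 \<longrightarrow>
        H u v * H u' v' \<le> H u v' * H u' v)"

lemma tp2_clamp01:
  assumes "tp2_on_unit_square H"
  shows "tp2 (\<lambda>x. H (clamp01 (fst x)) (clamp01 (snd x)))"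
  unfolding tp2_def fst_conv snd_conv
proof (intro allI impI)
  fix x1 y1 x2 y2 :: real
  assume "x1 \<le> y1" "x2 \<le> y2"
  then show "H (clamp01 x1) (clamp01 y2) * H (clamp01 y1) (clamp01 x2)
      \<le> H (clamp01 x1) (clamp01 x2) * H (clamp01 y1) (clamp01 y2)"
    using assms[unfolded tp2_on_unit_square_def, rule_format, of "clamp01 x1" "clamp01 y1" "clamp01 x2" "clamp01 y2"]
    by (simp add: clamp01_mono mult.commute)
qed

lemma tp2_clamp01_neg:
  assumes "tp2_on_unit_square H"
  shows "tp2 (\<lambda>x. H (clamp01 (- fst x)) (clamp01 (- snd x)))"
  unfolding tp2_def fst_conv snd_conv
proof (intro allI impI)
  fix x1 y1 x2 y2 :: real
  assume "x1 \<le> y1" "x2 \<le> y2"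
  then show "H (clamp01 (- x1)) (clamp01 (- y2)) * H (clamp01 (- y1)) (clamp01 (- x2))
      \<le> H (clamp01 (- x1)) (clamp01 (- x2)) * H (clamp01 (- y1)) (clamp01 (- y2))"
    using assms[unfolded tp2_on_unit_square_def, rule_format, of "clamp01 (- y1)" "clamp01 (- x1)" "clamp01 (- y2)" "clamp01 (- x2)"]
    by (simp add: clamp01_mono mult.commute)
qed

lemma tp2_clamp01_neg_fst:
  assumes "rr2_on_unit_square H"
  shows "tp2 (\<lambda>x. H (clamp01 (- fst x)) (clamp01 (snd x)))"
  unfolding tp2_def fst_conv snd_conv
proof (intro allI impI)
  fix x1 y1 x2 y2 :: real
  assume "x1 \<le> y1" "x2 \<le> y2"
  then show "H (clamp01 (- x1)) (clamp01 y2) * H (clamp01 (- y1)) (clamp01 x2)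
      \<le> H (clamp01 (- x1)) (clamp01 x2) * H (clamp01 (- y1)) (clamp01 y2)"
    using assms[unfolded rr2_on_unit_square_def, rule_format, of "clamp01 (- y1)" "clamp01 (- x1)" "clamp01 x2" "clamp01 y2"]
    by (simp add: clamp01_mono mult.commute)
qed

lemma tp2_clamp01_neg_snd:
  assumes "rr2_on_unit_square H"
  shows "tp2 (\<lambda>x. H (clamp01 (fst x)) (clamp01 (- snd x)))"
  unfolding tp2_def fst_conv snd_conv
proof (intro allI impI)
  fix x1 y1 x2 y2 :: real
  assume "x1 \<le> y1" "x2 \<le> y2"
  then show "H (clamp01 x1) (clamp01 (- y2)) * H (clamp01 y1) (clamp01 (- x2))
      \<le> H (clamp01 x1) (clamp01 (- x2)) * H (clamp01 y1) (clamp01 (- y2))"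
    using assms[unfolded rr2_on_unit_square_def, rule_format, of "clamp01 x1" "clamp01 y1" "clamp01 (- y2)" "clamp01 (- x2)"]
    by (simp add: clamp01_mono mult.commute)
qed

lemma rr2_on_unit_square_transpose:
  "rr2_on_unit_square H \<Longrightarrow> rr2_on_unit_square (\<lambda>u v. H v u)"
  unfolding rr2_on_unit_square_def by (simp add: mult.commute)

section \<open>The Ali-Mikhail-Haq copula\<close>

lemma AMH_simps [simp]:
  "AMH d 0 v = 0" "AMH d u 0 = 0" "AMH d 1 v = v" "AMH d u 1 = u"
  by (simp_all add: AMH_def)

lemma AMH_commute: "AMH d u v = AMH d v u"
  by (simp add: AMH_def mult.commute mult.left_commute)

lemma AMH_denominator_pos:
  fixes d u v :: real
  assumes "\<bar>d\<bar> \<le> 1" "0 \<le> u" "u \<le> 1" "0 \<le> v" "v \<le> 1" "0 < u \<or> 0 < v"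
  shows "0 < 1 + d * (1 - u) * (1 - v)"
proof -
  have "(1 - u) * (1 - v) \<le> 1 - u" "(1 - u) * (1 - v) \<le> 1 - v"
    using assms by (simp_all add: mult_left_le mult_left_le_one_le)
  then have "0 \<le> (1 - u) * (1 - v)" "(1 - u) * (1 - v) < 1"
    using assms by auto
  moreover have "\<bar>d * ((1 - u) * (1 - v))\<bar> \<le> (1 - u) * (1 - v)"
    using assms calculation by (simp add: abs_mult mult_left_le_one_le)
  ultimately show ?thesis
    by (simp add: mult.assoc abs_le_iff)
qed

lemma AMH_denominator_exchange:
  fixes d u u' v v' :: real
  shows "(1 + d*(1-u)*(1-v')) * (1 + d*(1-u')*(1-v)) - (1 + d*(1-u)*(1-v)) * (1 + d*(1-u')*(1-v'))
    = - d * (u' - u) * (v' - v)"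
  by (simp add: algebra_simps)

lemma AMH_nonneg:
  assumes "\<bar>d\<bar> \<le> 1" "0 \<le> u" "u \<le> 1" "0 \<le> v" "v \<le> 1"
  shows "0 \<le> AMH d u v"
proof (cases "u = 0")
  case False
  then show ?thesis
    using AMH_denominator_pos[of d u v] assms by (simp add: AMH_def)
qed simp

lemma AMH_tp2:
  assumes "-1 \<le> d" "d \<le> 0"
  shows "tp2_on_unit_square (AMH d)"
  unfolding tp2_on_unit_square_def
proof (intro allI impI)
  fix u u' v v' :: real
  assume uv: "0 \<le> u" "u \<le> u'" "u' \<le> 1" "0 \<le> v" "v \<le> v'" "v' \<le> 1"
  define D where "D a b = 1 + d * (1 - a) * (1 - b)" for a b
  show "AMH d u v' * AMH d u' v \<le> AMH d u v * AMH d u' v'"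
  proof (cases "u = 0 \<or> v = 0")
    case True
    then show ?thesis
      using assms uv by (auto intro!: mult_nonneg_nonneg AMH_nonneg)
  next
    case False
    then have pos: "0 < D a b" if "u \<le> a" "a \<le> 1" "v \<le> b" "b \<le> 1" for a b
      using assms uv that unfolding D_def by (intro AMH_denominator_pos) auto
    have "0 \<le> - d * (u' - u) * (v' - v)"
      using assms uv by (intro mult_nonneg_nonneg) auto
    then have "D u v * D u' v' \<le> D u v' * D u' v"
      using AMH_denominator_exchange[of d u v' u' v] unfolding D_def by linarith
    then have "u * u' * v * v' / (D u v' * D u' v) \<le> u * u' * v * v' / (D u v * D u' v')"
      using pos uv by (intro divide_left_mono mult_pos_pos) auto
    then show ?thesis
      by (simp add: AMH_def D_def algebra_simps)
  qed
qed

lemma AMH_margin_rr2: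
  assumes "0 \<le> d" "d \<le> 1"
  shows "rr2_on_unit_square (\<lambda>u v. u - AMH d u v)"
  unfolding rr2_on_unit_square_def
proof (intro allI impI)
  fix u u' v v' :: real
  assume uv: "0 \<le> u" "u \<le> u'" "u' \<le> 1" "0 \<le> v" "v \<le> v'" "v' \<le> 1"
  define D where "D a b = 1 + d * (1 - a) * (1 - b)" for a b
  have pos: "1 \<le> D a b" if "a \<le> 1" "b \<le> 1" for a b
    using assms that unfolding D_def by (simp add: mult_nonneg_nonneg)
  have margin: "a - AMH d a b = a * (1 - b) * (1 + d * (1 - a)) / D a b" if "a \<le> 1" "b \<le> 1" for a b
    using pos[OF that] unfolding AMH_def D_def by (simp add: field_simps)
  define N where "N = u * (1 - v) * (1 + d * (1 - u)) * (u' * (1 - v') * (1 + d * (1 - u')))"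
  have "0 \<le> N"
    using assms uv unfolding N_def by (intro mult_nonneg_nonneg) auto
  moreover have "0 \<le> d * (u' - u) * (v' - v)"
    using assms uv by (intro mult_nonneg_nonneg) auto
  then have "D u v' * D u' v \<le> D u v * D u' v'"
    using AMH_denominator_exchange[of d u v' u' v] unfolding D_def by linarith
  ultimately have "N / (D u v * D u' v') \<le> N / (D u v' * D u' v)"
    using pos uv by (intro divide_left_mono mult_pos_pos) (auto intro: less_le_trans[OF zero_less_one])
  then show "(u - AMH d u v) * (u' - AMH d u' v') \<le> (u - AMH d u v') * (u' - AMH d u' v)"
    using uv by (simp add: margin N_def algebra_simps)
qed

lemma AMH_ge_mult:
  assumes "-1 \<le> d" "d \<le> 0" "0 \<le> u" "u \<le> 1" "0 \<le> v" "v \<le> 1"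
  shows "u * v \<le> AMH d u v"
proof (cases "u = 0")
  case False
  have "0 \<le> (1 - u) * (1 - v)"
    using assms by simp
  then have "1 + d * (1 - u) * (1 - v) \<le> 1"
    using assms by (simp add: mult.assoc mult_nonpos_nonneg)
  moreover have "0 < 1 + d * (1 - u) * (1 - v)"
    using False assms by (intro AMH_denominator_pos) auto
  ultimately have "u * v / 1 \<le> u * v / (1 + d * (1 - u) * (1 - v))"
    using assms by (intro divide_left_mono) auto
  then show ?thesis
    by (simp add: AMH_def)
qed simp

lemma AMH_survival_eq:
  assumes "0 < 1 + d * (1 - u) * (1 - v)"
  shows "1 - u - v + AMH d u v = (1 - u) * (1 - v) * ((1 + d * (1 - u - v)) / (1 + d * (1 - u) * (1 - v)))"
  using assms unfolding AMH_def by (simp add: field_simps)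

lemma AMH_survival_ratio_tp2:
  fixes d u u' v v' :: real
  defines "R \<equiv> \<lambda>a b. (1 + d * (1 - a - b)) / (1 + d * (1 - a) * (1 - b))"
  assumes "-1 \<le> d" "d \<le> 0" "0 \<le> u" "u \<le> u'" "u' \<le> 1" "0 \<le> v" "v \<le> v'" "v' \<le> 1"
    and "0 < u \<or> 0 < v"
  shows "R u v' * R u' v \<le> R u v * R u' v'"
proof -
  define D where "D a b = 1 + d * (1 - a) * (1 - b)" for a b
  define E where "E a b = 1 + d * (1 - a - b)" for a b
  define K where "K = (u' - u) * (v' - v)"
  define X where "X = E u v * E u' v'"
  define Y where "Y = D u v * D u' v'"
  have D_pos: "0 < D a b" if "u \<le> a" "a \<le> 1" "v \<le> b" "b \<le> 1" for a b
    using assms that unfolding D_def by (intro AMH_denominator_pos) auto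
  have D_le_E: "D a b \<le> E a b" if "0 \<le> a" "0 \<le> b" for a b
    using assms that mult_nonneg_nonneg[of a b] mult_nonneg_nonpos[of "a * b" d]
    unfolding D_def E_def by (simp add: algebra_simps)
  have "0 < D u v" "0 < D u' v'" "D u v \<le> E u v" "D u' v' \<le> E u' v'"
    using D_pos D_le_E assms by auto
  then have "0 < Y" "Y \<le> X"
    unfolding X_def Y_def by (auto intro!: mult_mono)
  moreover have "- Y \<le> d * Y"
    using mult_right_mono[of "-1" d Y] assms \<open>0 < Y\<close> by simp
  ultimately have "0 \<le> X + d * Y"
    by linarith
  moreover have "0 \<le> K"
    using assms unfolding K_def by simp
  ultimately have "0 \<le> (- d) * K * (X + d * Y)"
    using assms by (intro mult_nonneg_nonneg) auto
  moreover have "E u v' * E u' v = X + d\<^sup>2 * K" "D u v' * D u' v = Y - d * K"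
    using AMH_denominator_exchange[of d u v' u' v]
    by (simp_all add: E_def D_def X_def Y_def K_def algebra_simps power2_eq_square)
  then have "X * (D u v' * D u' v) - E u v' * E u' v * Y = (- d) * K * (X + d * Y)"
    by (simp only:) (simp add: algebra_simps power2_eq_square)
  ultimately have "E u v' * E u' v * Y \<le> X * (D u v' * D u' v)"
    by linarith
  moreover have "0 < D u v' * D u' v"
    using D_pos assms by simp
  ultimately have "E u v' * E u' v / (D u v' * D u' v) \<le> X / Y"
    using \<open>0 < Y\<close> by (simp add: field_simps)
  then show ?thesis
    by (simp add: R_def D_def E_def X_def Y_def)
qed

lemma AMH_survival_tp2:
  assumes "-1 \<le> d" "d \<le> 0"
  shows "tp2_on_unit_square (\<lambda>u v. 1 - u - v + AMH d u v)"
  unfolding tp2_on_unit_square_def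
proof (intro allI impI)
  fix u u' v v' :: real
  assume uv: "0 \<le> u" "u \<le> u'" "u' \<le> 1" "0 \<le> v" "v \<le> v'" "v' \<le> 1"
  let ?S = "\<lambda>a b. 1 - a - b + AMH d a b"
  let ?R = "\<lambda>a b. (1 + d * (1 - a - b)) / (1 + d * (1 - a) * (1 - b))"
  show "?S u v' * ?S u' v \<le> ?S u v * ?S u' v'"
  proof (cases "u = 0 \<and> v = 0")
    case True \<comment> \<open>the denominator 1 + d (1 - u) (1 - v) vanishes here when d = -1\<close>
    then show ?thesis
      using AMH_ge_mult[of d u' v'] assms uv by (simp add: algebra_simps)
  next
    case False
    then have S_eq: "?S a b = (1 - a) * (1 - b) * ?R a b" if "u \<le> a" "a \<le> 1" "v \<le> b" "b \<le> 1" for a b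
      using assms uv that by (intro AMH_survival_eq AMH_denominator_pos) auto
    have "?R u v' * ?R u' v \<le> ?R u v * ?R u' v'"
      using False assms uv by (intro AMH_survival_ratio_tp2) auto
    moreover have "0 \<le> (1 - u) * (1 - v') * ((1 - u') * (1 - v))"
      using uv by simp
    ultimately have "(1 - u) * (1 - v') * ((1 - u') * (1 - v)) * (?R u v' * ?R u' v)
        \<le> (1 - u) * (1 - v') * ((1 - u') * (1 - v)) * (?R u v * ?R u' v')"
      by (rule mult_left_mono)
    then show ?thesis
      using uv by (simp only: S_eq order_refl) (simp add: ac_simps)
  qed
qed

theorem mainTheorem5:
  fixes \<delta> :: real
  shows "(0 \<le> \<delta> \<and> \<delta> \<le> 1 \<longrightarrow> copula_I (AMH \<delta>) (-1, 1) \<and> copula_I (AMH \<delta>) (1, -1))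
       \<and> (-1 \<le> \<delta> \<and> \<delta> \<le> 0 \<longrightarrow> copula_I (AMH \<delta>) (1, 1) \<and> copula_I (AMH \<delta>) (-1, -1))"
proof -
  note copula_I_AMH = copula_I_if_orthant_tp2[where C = "AMH \<delta>", OF AMH_simps(4) AMH_simps(3)]
  have "copula_I (AMH \<delta>) (-1, 1) \<and> copula_I (AMH \<delta>) (1, -1)" if "0 \<le> \<delta>" "\<delta> \<le> 1"
  proof
    have rr2: "rr2_on_unit_square (\<lambda>u v. u - AMH \<delta> u v)"
      using that by (rule AMH_margin_rr2)
    then have rr2': "rr2_on_unit_square (\<lambda>u v. v - AMH \<delta> u v)"
      using rr2_on_unit_square_transpose[OF rr2] by (simp add: AMH_commute)
    show "copula_I (AMH \<delta>) (-1, 1)"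
      by (rule copula_I_AMH[OF tp2_clamp01_neg_fst[OF rr2]]) (erule copula_distributed.orthant_mp)
    show "copula_I (AMH \<delta>) (1, -1)"
      by (rule copula_I_AMH[OF tp2_clamp01_neg_snd[OF rr2']]) (erule copula_distributed.orthant_pm)
  qed
  moreover have "copula_I (AMH \<delta>) (1, 1) \<and> copula_I (AMH \<delta>) (-1, -1)" if "-1 \<le> \<delta>" "\<delta> \<le> 0"
  proof
    show "copula_I (AMH \<delta>) (1, 1)"
      by (rule copula_I_AMH[OF tp2_clamp01[OF AMH_survival_tp2[OF that]]])
        (erule copula_distributed.orthant_pp)
    show "copula_I (AMH \<delta>) (-1, -1)"
      by (rule copula_I_AMH[OF tp2_clamp01_neg[OF AMH_tp2[OF that]]]) (erule copula_distributed.orthant_mm)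
  qed
  ultimately show ?thesis
    by blast
qed

end
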